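(* Let $f:\mathbb{R}^n\to\mathbb{R}^n$ be of class $\mathcal{C}^2$ with $\dot x=f(x)$ forward complete, and write $F(x)=\frac{\partial f}{\partial x}(x)$. Suppose there exist an integer $N\ge n$, a $\mathcal{C}^2$ mapping $\phi:\mathbb{R}^n\to\mathbb{R}^N$ and a Hurwitz matrix $A\in\mathbb{R}^{N\times N}$ such that $\Phi(x):=\frac{\partial\phi}{\partial x}(x)$ has full column rank $n$ for all $x$ and $\frac{\partial\phi}{\partial x}(x)f(x)=A\phi(x)$ for all $x$. Let $P=P^\top\succ 0$ be the solution of $A^\top P+PA=-I_N$ and set $M(x)=\Phi(x)^\top P\Phi(x)$. Then $M(x)\succ0$ for all $x$ and $$\partial_f M(x)+F(x)^\top M(x)+M(x)F(x)=-\Phi(x)^\top\Phi(x)\preceq -\tfrac{1}{\lambda_{\max}(P)}M(x)\prec 0\quad\forall x,$$ so the system is asymptotically contracting with metric $M$. If moreover $\Phi^\top\Phi$ is uniformly bounded, then $M$ is uniformly bounded and the system is contracting (with rate $\rho=1/\lambda_{\max}(P)$).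
   Context: For a matrix function $M(x)$ and vector field $f$, $\partial_f M(x):=\sum_i \frac{\partial M}{\partial x_i}(x) f_i(x)$ (also written $\dot M$). A matrix function $A(x)$ is uniformly bounded if $a_1I\preceq A(x)\preceq a_2 I$ for all $x$ with constants $a_2\ge a_1>0$. The system $\dot x=f(x,t)$ (or $\dot x=f(x)$) is called contracting if there is a uniformly bounded $M(x,t)\succ0$ with $\dot M+F^\top M+MF\preceq-\rho M$ for some $\rho>0$, where $F=\partial f/\partial x$ and $\dot M$ is the derivative along solutions; it is asymptotically contracting if instead $\dot M+F^\top M+MF\prec 0$. $\lambda_{\max}(P)$ is the largest eigenvalue of $P$. *)

theory Defs
  imports "HOL-Analysis.Analysis"
begin

definition C2 :: "('a::euclidean_space \<Rightarrow> 'b::euclidean_space) \<Rightarrow> bool" where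
  "C2 f \<longleftrightarrow> (\<exists>f' f''.
      (\<forall>x. (f has_derivative blinfun_apply (f' x)) (at x)) \<and>
      (\<forall>x. (f' has_derivative blinfun_apply (f'' x)) (at x)) \<and>
      continuous_on UNIV f'')"

definition jac :: "(real^'n \<Rightarrow> real^'m) \<Rightarrow> real^'n \<Rightarrow> real^'n^'m" where
  "jac f x = matrix (frechet_derivative f (at x))"

text \<open>Derivative of a matrix function along the vector field f:
  sum_i (dM/dx_i)(x) f_i(x), i.e. the directional derivative of M at x in direction f x.\<close>
definition lie_deriv :: "(real^'n \<Rightarrow> real^'n) \<Rightarrow> (real^'n \<Rightarrow> real^'n^'n) \<Rightarrow> real^'n \<Rightarrow> real^'n^'n" where
  "lie_deriv f M x = frechet_derivative M (at x) (f x)"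

definition forward_complete :: "(real^'n \<Rightarrow> real^'n) \<Rightarrow> bool" where
  "forward_complete f \<longleftrightarrow> (\<forall>x0. \<exists>x::real \<Rightarrow> real^'n. x 0 = x0 \<and>
      (\<forall>t\<ge>0. (x has_vector_derivative f (x t)) (at t within {0..})))"

definition hurwitz :: "real^'m^'m \<Rightarrow> bool" where
  "hurwitz A \<longleftrightarrow> (\<forall>(l::complex) (v::complex^'m). v \<noteq> 0 \<longrightarrow>
      (\<chi> i j. complex_of_real (A $ i $ j)) *v v = l *s v \<longrightarrow> Re l < 0)"

definition symmetric_mat :: "real^'n^'n \<Rightarrow> bool" where
  "symmetric_mat P \<longleftrightarrow> transpose P = P"

definition loewner_le :: "real^'n^'n \<Rightarrow> real^'n^'n \<Rightarrow> bool" (infix "\<preceq>\<^sub>L" 50) where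
  "Q \<preceq>\<^sub>L R \<longleftrightarrow> (\<forall>v. v \<bullet> (Q *v v) \<le> v \<bullet> (R *v v))"

definition pos_def :: "real^'n^'n \<Rightarrow> bool" where
  "pos_def Q \<longleftrightarrow> (\<forall>v. v \<noteq> 0 \<longrightarrow> 0 < v \<bullet> (Q *v v))"

definition neg_def :: "real^'n^'n \<Rightarrow> bool" where
  "neg_def Q \<longleftrightarrow> (\<forall>v. v \<noteq> 0 \<longrightarrow> v \<bullet> (Q *v v) < 0)"

definition lambda_max :: "real^'n^'n \<Rightarrow> real" where
  "lambda_max P = Max {l. \<exists>v. v \<noteq> 0 \<and> P *v v = l *s v}"

definition unif_bounded :: "('a \<Rightarrow> real^'n^'n) \<Rightarrow> bool" where
  "unif_bounded A \<longleftrightarrow> (\<exists>a1 a2. 0 < a1 \<and> a1 \<le> a2 \<and>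
      (\<forall>x. a1 *\<^sub>R mat 1 \<preceq>\<^sub>L A x \<and> A x \<preceq>\<^sub>L a2 *\<^sub>R mat 1))"

definition contracting_with :: "(real^'n \<Rightarrow> real^'n) \<Rightarrow> (real^'n \<Rightarrow> real^'n^'n) \<Rightarrow> real \<Rightarrow> bool" where
  "contracting_with f M \<rho> \<longleftrightarrow> 0 < \<rho> \<and> unif_bounded M \<and> (\<forall>x. pos_def (M x)) \<and>
     (\<forall>x. lie_deriv f M x + transpose (jac f x) ** M x + M x ** jac f x \<preceq>\<^sub>L - (\<rho> *\<^sub>R M x))"

definition asym_contracting_with :: "(real^'n \<Rightarrow> real^'n) \<Rightarrow> (real^'n \<Rightarrow> real^'n^'n) \<Rightarrow> bool" where
  "asym_contracting_with f M \<longleftrightarrow> (\<forall>x. pos_def (M x)) \<and>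
     (\<forall>x. neg_def (lie_deriv f M x + transpose (jac f x) ** M x + M x ** jac f x))"

end

theory Submission
  imports Defs
begin

(* Differentiating the immersion identity \<Phi>(x) f(x) = A \<phi>(x) along x, and using the symmetry
   of the second derivative of \<phi>, gives the derivative of \<Phi> along f as A \<Phi> - \<Phi> F.
   Hence \<partial>_f M + F^T M + M F = \<Phi>^T (A^T P + P A) \<Phi> = - \<Phi>^T \<Phi>.  Full column rank makes
   \<Phi> v \<noteq> 0 for v \<noteq> 0, so M is positive definite, and the Rayleigh bound
   w^T P w \<le> \<lambda>_max(P) |w|^2 at w = \<Phi> v compares -\<Phi>^T \<Phi> with -M / \<lambda>_max(P).  Uniform bounds
   on \<Phi>^T \<Phi> transfer to M through the extreme values of the quadratic form of P. *)

lemma norm_sub_linear_le_vector_derivative_bound: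
  fixes g :: "real \<Rightarrow> 'b::real_normed_vector"
  assumes "0 \<le> h"
    and deriv: "\<And>t. t \<in> {0..h} \<Longrightarrow> (g has_vector_derivative g' t) (at t within {0..h})"
    and bound: "\<And>t. t \<in> {0..h} \<Longrightarrow> norm (g' t - c) \<le> B"
  shows "norm (g h - g 0 - h *\<^sub>R c) \<le> B * h"
proof -
  have "norm ((g h - h *\<^sub>R c) - (g 0 - 0 *\<^sub>R c)) \<le> B * norm (h - 0)"
  proof (rule differentiable_bound[of "{0..h}" "\<lambda>t. g t - t *\<^sub>R c" "\<lambda>t s. s *\<^sub>R (g' t - c)"])
    show "((\<lambda>t. g t - t *\<^sub>R c) has_derivative (\<lambda>s. s *\<^sub>R (g' t - c))) (at t within {0..h})"
      if "t \<in> {0..h}" for t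
      using deriv[OF that] unfolding has_vector_derivative_def
      by (auto intro!: derivative_eq_intros simp: algebra_simps)
    show "onorm (\<lambda>s. s *\<^sub>R (g' t - c)) \<le> B" if "t \<in> {0..h}" for t
      using bound[OF that] by (intro onorm_le) (simp add: mult.commute[of B] mult_left_mono)
  qed (use assms in auto)
  then show ?thesis
    using \<open>0 \<le> h\<close> by (simp add: algebra_simps)
qed

lemma has_vector_derivative_comp_line:
  assumes "\<And>y. (g has_derivative g' y) (at y)"
  shows "((\<lambda>t. g (p + t *\<^sub>R w)) has_vector_derivative g' (p + t *\<^sub>R w) w) (at t within S)"
proof -
  have "((\<lambda>t. g (p + t *\<^sub>R w)) has_derivative (\<lambda>s. g' (p + t *\<^sub>R w) (s *\<^sub>R w))) (at t within S)"
    by (rule has_derivative_compose[OF _ assms]) (auto intro!: derivative_eq_intros)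
  moreover have "linear (g' (p + t *\<^sub>R w))"
    using assms has_derivative_linear by blast
  ultimately show ?thesis
    by (simp add: has_vector_derivative_def linear_scale)
qed

lemma derivative_difference_estimate:
  fixes \<phi>' :: "'a::real_normed_vector \<Rightarrow> 'a \<Rightarrow>\<^sub>L 'b::real_normed_vector"
  assumes d2: "\<And>y. (\<phi>' has_derivative blinfun_apply (\<phi>'' y)) (at y)"
    and "0 \<le> h"
    and close: "\<And>t. t \<in> {0..h} \<Longrightarrow> norm (\<phi>'' (p + t *\<^sub>R w) - \<phi>'' x) \<le> e"
  shows "norm (\<phi>' (p + h *\<^sub>R w) u - \<phi>' p u - h *\<^sub>R \<phi>'' x w u) \<le> e * norm w * norm u * h"
proof -
  have "norm (\<phi>' (p + h *\<^sub>R w) u - \<phi>' (p + 0 *\<^sub>R w) u - h *\<^sub>R \<phi>'' x w u) \<le> e * norm w * norm u * h"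
  proof (rule norm_sub_linear_le_vector_derivative_bound[OF \<open>0 \<le> h\<close>])
    fix t assume t: "t \<in> {0..h}"
    show "((\<lambda>t. \<phi>' (p + t *\<^sub>R w) u) has_vector_derivative \<phi>'' (p + t *\<^sub>R w) w u) (at t within {0..h})"
      by (rule bounded_linear.has_vector_derivative[OF blinfun.bounded_linear_left
            has_vector_derivative_comp_line[OF d2]])
    have "norm ((\<phi>'' (p + t *\<^sub>R w) - \<phi>'' x) w u) \<le> norm (\<phi>'' (p + t *\<^sub>R w) - \<phi>'' x) * norm w * norm u"
      by (meson norm_blinfun mult_right_mono norm_ge_zero order_trans)
    also have "\<dots> \<le> e * norm w * norm u"
      by (intro mult_right_mono close t) auto
    finally show "norm (\<phi>'' (p + t *\<^sub>R w) w u - \<phi>'' x w u) \<le> e * norm w * norm u"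
      by (simp add: blinfun.bilinear_simps)
  qed
  then show ?thesis by simp
qed

lemma second_difference_estimate:
  fixes \<phi> :: "'a::real_normed_vector \<Rightarrow> 'b::real_normed_vector"
  assumes d1: "\<And>y. (\<phi> has_derivative blinfun_apply (\<phi>' y)) (at y)"
    and d2: "\<And>y. (\<phi>' has_derivative blinfun_apply (\<phi>'' y)) (at y)"
    and "0 \<le> h"
    and close: "\<And>s t. s \<in> {0..h} \<Longrightarrow> t \<in> {0..h} \<Longrightarrow> norm (\<phi>'' (x + s *\<^sub>R u + t *\<^sub>R w) - \<phi>'' x) \<le> e"
  shows "norm (\<phi> (x + h *\<^sub>R u + h *\<^sub>R w) - \<phi> (x + h *\<^sub>R u) - \<phi> (x + h *\<^sub>R w) + \<phi> x
            - (h * h) *\<^sub>R \<phi>'' x w u) \<le> e * norm w * norm u * h * h"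
proof -
  have "norm ((\<phi> (x + h *\<^sub>R u + h *\<^sub>R w) - \<phi> (x + h *\<^sub>R u)) - (\<phi> (x + 0 *\<^sub>R u + h *\<^sub>R w) - \<phi> (x + 0 *\<^sub>R u))
      - h *\<^sub>R (h *\<^sub>R \<phi>'' x w u)) \<le> e * norm w * norm u * h * h"
  proof (rule norm_sub_linear_le_vector_derivative_bound[OF \<open>0 \<le> h\<close>])
    fix s assume s: "s \<in> {0..h}"
    have "((\<lambda>s. \<phi> (x + h *\<^sub>R w + s *\<^sub>R u)) has_vector_derivative \<phi>' (x + h *\<^sub>R w + s *\<^sub>R u) u) (at s within {0..h})"
      "((\<lambda>s. \<phi> (x + s *\<^sub>R u)) has_vector_derivative \<phi>' (x + s *\<^sub>R u) u) (at s within {0..h})"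
      by (rule has_vector_derivative_comp_line[OF d1])+
    then show "((\<lambda>s. \<phi> (x + s *\<^sub>R u + h *\<^sub>R w) - \<phi> (x + s *\<^sub>R u)) has_vector_derivative
        \<phi>' (x + s *\<^sub>R u + h *\<^sub>R w) u - \<phi>' (x + s *\<^sub>R u) u) (at s within {0..h})"
      by (auto intro!: derivative_eq_intros simp: algebra_simps)
    show "norm (\<phi>' (x + s *\<^sub>R u + h *\<^sub>R w) u - \<phi>' (x + s *\<^sub>R u) u - h *\<^sub>R \<phi>'' x w u)
        \<le> e * norm w * norm u * h"
      using close[OF s] by (rule derivative_difference_estimate[OF d2 \<open>0 \<le> h\<close>])
  qed
  then show ?thesis by (simp add: algebra_simps)
qed

lemma isCont_close_on_small_square:
  fixes g :: "'a::real_normed_vector \<Rightarrow> 'b::real_normed_vector"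
  assumes "isCont g x" and "e > 0"
  obtains h where "h > 0"
    and "\<And>s t. s \<in> {0..h} \<Longrightarrow> t \<in> {0..h} \<Longrightarrow> norm (g (x + s *\<^sub>R u + t *\<^sub>R w) - g x) \<le> e"
proof -
  obtain d where "d > 0" and d: "\<And>y. dist y x < d \<Longrightarrow> dist (g y) (g x) < e"
    using assms unfolding continuous_at_eps_delta by blast
  have np: "norm u + norm w + 1 > 0" by (simp add: add_nonneg_pos)
  define h where "h = d / (norm u + norm w + 1)"
  have "h > 0" using \<open>d > 0\<close> np by (simp add: h_def)
  moreover have "norm (g (x + s *\<^sub>R u + t *\<^sub>R w) - g x) \<le> e"
    if "s \<in> {0..h}" "t \<in> {0..h}" for s t
  proof -
    have "norm (s *\<^sub>R u + t *\<^sub>R w) \<le> norm (s *\<^sub>R u) + norm (t *\<^sub>R w)"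
      by (rule norm_triangle_ineq)
    also have "\<dots> \<le> h * norm u + h * norm w"
      using that by (intro add_mono) (simp_all add: mult_right_mono)
    also have "\<dots> < h * (norm u + norm w + 1)"
      using \<open>h > 0\<close> by (simp add: algebra_simps)
    also have "\<dots> = d"
      using np by (simp add: h_def)
    finally have "dist (x + s *\<^sub>R u + t *\<^sub>R w) x < d"
      by (simp add: dist_norm add.assoc)
    then show ?thesis
      using d by (simp add: dist_norm less_imp_le)
  qed
  ultimately show ?thesis using that by blast
qed

text \<open>The second difference \<open>\<Delta>\<close> is symmetric in \<open>u\<close> and \<open>w\<close>, and divided by \<open>h\<^sup>2\<close> it
  approximates both \<open>\<phi>'' x w u\<close> and \<open>\<phi>'' x u w\<close>.\<close>

lemma second_derivative_symmetric:
  fixes \<phi> :: "'a::real_normed_vector \<Rightarrow> 'b::real_normed_vector"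
  assumes d1: "\<And>y. (\<phi> has_derivative blinfun_apply (\<phi>' y)) (at y)"
    and d2: "\<And>y. (\<phi>' has_derivative blinfun_apply (\<phi>'' y)) (at y)"
    and cont: "continuous_on UNIV \<phi>''"
  shows "\<phi>'' x w u = \<phi>'' x u w"
proof -
  define K where "K = 2 * norm u * norm w"
  have small: "norm (\<phi>'' x w u - \<phi>'' x u w) \<le> e * K" if "e > 0" for e
  proof -
    obtain h where "h > 0"
      and close: "\<And>s t. s \<in> {0..h} \<Longrightarrow> t \<in> {0..h} \<Longrightarrow> norm (\<phi>'' (x + s *\<^sub>R u + t *\<^sub>R w) - \<phi>'' x) \<le> e"
      using isCont_close_on_small_square[OF _ \<open>e > 0\<close>] cont
      by (metis continuous_on_eq_continuous_at open_UNIV UNIV_I)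
    have close': "norm (\<phi>'' (x + s *\<^sub>R w + t *\<^sub>R u) - \<phi>'' x) \<le> e"
      if "s \<in> {0..h}" "t \<in> {0..h}" for s t
      using close[OF that(2,1)] by (simp add: add_ac)
    have "0 \<le> h" using \<open>h > 0\<close> by simp
    define \<Delta> where "\<Delta> = \<phi> (x + h *\<^sub>R u + h *\<^sub>R w) - \<phi> (x + h *\<^sub>R u) - \<phi> (x + h *\<^sub>R w) + \<phi> x"
    have "norm (\<Delta> - (h * h) *\<^sub>R \<phi>'' x w u) \<le> e * norm w * norm u * h * h"
      unfolding \<Delta>_def by (rule second_difference_estimate[OF d1 d2 \<open>0 \<le> h\<close> close])
    moreover have "\<Delta> = \<phi> (x + h *\<^sub>R w + h *\<^sub>R u) - \<phi> (x + h *\<^sub>R w) - \<phi> (x + h *\<^sub>R u) + \<phi> x"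
      by (simp add: \<Delta>_def add_ac)
    then have "norm (\<Delta> - (h * h) *\<^sub>R \<phi>'' x u w) \<le> e * norm w * norm u * h * h"
      using second_difference_estimate[OF d1 d2 \<open>0 \<le> h\<close> close'] by (simp add: mult_ac)
    ultimately have "norm ((h * h) *\<^sub>R (\<phi>'' x w u - \<phi>'' x u w)) \<le> (h * h) * (e * K)"
      using norm_triangle_ineq4[of "\<Delta> - (h * h) *\<^sub>R \<phi>'' x u w" "\<Delta> - (h * h) *\<^sub>R \<phi>'' x w u"]
      by (simp add: K_def algebra_simps)
    then show ?thesis
      using \<open>h > 0\<close> by simp
  qed
  have "norm (\<phi>'' x w u - \<phi>'' x u w) \<le> 0"
  proof (rule field_le_epsilon)
    fix e :: real assume "e > 0"
    have "K \<ge> 0" by (simp add: K_def)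
    then have "norm (\<phi>'' x w u - \<phi>'' x u w) \<le> e / (K + 1) * K"
      using \<open>e > 0\<close> by (intro small) simp
    also have "\<dots> \<le> 0 + e"
      using \<open>K \<ge> 0\<close> \<open>e > 0\<close> by (simp add: field_simps)
    finally show "norm (\<phi>'' x w u - \<phi>'' x u w) \<le> 0 + e" .
  qed
  then show ?thesis by simp
qed

lemma linear_coeff_eq_0_if_quadratic_nonpos:
  fixes a b :: real
  assumes "\<And>t. a * t + b * t\<^sup>2 \<le> 0"
  shows "a = 0"
proof (rule ccontr)
  assume "a \<noteq> 0"
  define c where "c = \<bar>b\<bar> + 1"
  have "c > 0" "c + b > 0" by (auto simp: c_def)
  have "a * (a / c) + b * (a / c)\<^sup>2 = a\<^sup>2 * (c + b) / c\<^sup>2"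
    using \<open>c > 0\<close> by (simp add: field_simps power2_eq_square)
  also have "\<dots> > 0"
    using \<open>a \<noteq> 0\<close> \<open>c > 0\<close> \<open>c + b > 0\<close> by simp
  finally show False
    using assms[of "a / c"] by simp
qed

lemma symmetric_mat_inner_commute:
  fixes P :: "real^'n^'n"
  assumes "symmetric_mat P"
  shows "x \<bullet> (P *v y) = (P *v x) \<bullet> y"
  using assms unfolding symmetric_mat_def
  by (metis dot_lmul_matrix transpose_matrix_vector)

lemma quadratic_form_attains_max:
  fixes P :: "real^'n^'n"
  obtains w0 where "norm w0 = 1" and "\<And>w. w \<bullet> (P *v w) \<le> (w0 \<bullet> (P *v w0)) * (w \<bullet> w)"
proof -
  define q where "q w = w \<bullet> (P *v w)" for w
  have "continuous_on (sphere 0 1) q"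
    unfolding q_def by (intro continuous_intros linear_continuous_on matrix_vector_mul_bounded_linear)
  moreover have "sphere (0::real^'n) 1 \<noteq> {}"
    using vector_choose_size[of 1] by auto
  ultimately obtain w0 where w0: "w0 \<in> sphere 0 1" and max: "\<And>y. y \<in> sphere 0 1 \<Longrightarrow> q y \<le> q w0"
    using continuous_attains_sup[OF compact_sphere] by blast
  have "q w \<le> q w0 * (w \<bullet> w)" for w
  proof (cases "w = 0")
    case False
    have "q w = (w \<bullet> w) * q ((1 / norm w) *\<^sub>R w)"
      using False unfolding q_def
      by (simp add: matrix_vector_mult_scaleR power2_norm_eq_inner[symmetric] field_simps power2_eq_square)
    also have "\<dots> \<le> (w \<bullet> w) * q w0"
      using False by (intro mult_left_mono max) auto
    finally show ?thesis by (simp add: mult.commute)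
  qed (simp add: q_def)
  with w0 that show ?thesis unfolding q_def by simp
qed

lemma quadratic_form_attains_min:
  fixes P :: "real^'n^'n"
  obtains w1 where "norm w1 = 1" and "\<And>w. (w1 \<bullet> (P *v w1)) * (w \<bullet> w) \<le> w \<bullet> (P *v w)"
proof -
  have neg: "w \<bullet> ((- P) *v w) = - (w \<bullet> (P *v w))" for w :: "real^'n"
    by (simp add: matrix_vector_mult_def inner_vec_def sum_negf)
  obtain w1 where "norm w1 = 1" "\<And>w. w \<bullet> ((- P) *v w) \<le> (w1 \<bullet> ((- P) *v w1)) * (w \<bullet> w)"
    using quadratic_form_attains_max[of "- P"] by blast
  with that show ?thesis unfolding neg by simp
qed

lemma pos_def_coercive:
  fixes P :: "real^'n^'n"
  assumes "pos_def P"
  obtains \<mu> where "\<mu> > 0" and "\<And>w. \<mu> * (w \<bullet> w) \<le> w \<bullet> (P *v w)"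
proof -
  obtain w1 where "norm w1 = 1" and "\<And>w. (w1 \<bullet> (P *v w1)) * (w \<bullet> w) \<le> w \<bullet> (P *v w)"
    using quadratic_form_attains_min[of P] by blast
  moreover have "w1 \<noteq> 0"
    using \<open>norm w1 = 1\<close> by auto
  then have "w1 \<bullet> (P *v w1) > 0"
    using assms unfolding pos_def_def by blast
  ultimately show ?thesis using that by blast
qed

lemma symmetric_mat_maximizer_is_eigenvector:
  fixes P :: "real^'n^'n"
  assumes sym: "symmetric_mat P" and "norm w0 = 1"
    and max: "\<And>w. w \<bullet> (P *v w) \<le> (w0 \<bullet> (P *v w0)) * (w \<bullet> w)"
  shows "P *v w0 = (w0 \<bullet> (P *v w0)) *\<^sub>R w0"
proof -
  define q0 where "q0 = w0 \<bullet> (P *v w0)"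
  define u where "u = P *v w0 - q0 *\<^sub>R w0"
  have "w0 \<bullet> w0 = 1"
    using \<open>norm w0 = 1\<close> by (simp add: dot_square_norm)
  have swap: "w0 \<bullet> (P *v u) = u \<bullet> (P *v w0)"
    using symmetric_mat_inner_commute[OF sym, of w0 u] by (simp add: inner_commute)
  have "2 * (u \<bullet> (P *v w0) - q0 * (u \<bullet> w0)) = 0"
  proof (rule linear_coeff_eq_0_if_quadratic_nonpos[where b = "u \<bullet> (P *v u) - q0 * (u \<bullet> u)"])
    fix t
    have "(w0 + t *\<^sub>R u) \<bullet> (P *v (w0 + t *\<^sub>R u)) = q0 + 2 * t * (u \<bullet> (P *v w0)) + t\<^sup>2 * (u \<bullet> (P *v u))"
      unfolding q0_def using swap
      by (simp add: algebra_simps inner_add_left inner_add_right power2_eq_square)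
    moreover have "(w0 + t *\<^sub>R u) \<bullet> (w0 + t *\<^sub>R u) = 1 + 2 * t * (u \<bullet> w0) + t\<^sup>2 * (u \<bullet> u)"
      using \<open>w0 \<bullet> w0 = 1\<close>
      by (simp add: algebra_simps inner_add_left inner_add_right power2_eq_square inner_commute[of w0 u])
    ultimately show "2 * (u \<bullet> (P *v w0) - q0 * (u \<bullet> w0)) * t + (u \<bullet> (P *v u) - q0 * (u \<bullet> u)) * t\<^sup>2 \<le> 0"
      using max[of "w0 + t *\<^sub>R u"] \<open>w0 \<bullet> w0 = 1\<close> swap inner_commute[of w0 u]
      by (simp add: q0_def algebra_simps power2_eq_square)
  qed
  then have "u \<bullet> u = 0"
    unfolding u_def by (simp add: algebra_simps inner_diff_right)
  then show ?thesis
    unfolding u_def q0_def by simp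
qed

lemma finite_eigenvalues_symmetric_mat:
  fixes P :: "real^'n^'n"
  assumes sym: "symmetric_mat P"
  shows "finite {l. \<exists>v. v \<noteq> 0 \<and> P *v v = l *s v}" (is "finite ?E")
proof -
  define g where "g l = (SOME v. v \<noteq> 0 \<and> P *v v = l *\<^sub>R v)" for l
  have g: "g l \<noteq> 0 \<and> P *v g l = l *\<^sub>R g l" if "l \<in> ?E" for l
    unfolding g_def by (rule someI_ex) (use that in \<open>auto simp: scalar_mult_eq_scaleR\<close>)
  have orth: "g l \<bullet> g l' = 0" if "l \<in> ?E" "l' \<in> ?E" "l \<noteq> l'" for l l'
  proof -
    have "l * (g l \<bullet> g l') = (P *v g l) \<bullet> g l'" using g[OF that(1)] by simp
    also have "\<dots> = g l \<bullet> (P *v g l')" by (rule symmetric_mat_inner_commute[OF sym, symmetric])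
    also have "\<dots> = l' * (g l \<bullet> g l')" using g[OF that(2)] by simp
    finally show ?thesis using that(3) by simp
  qed
  have "inj_on g ?E"
  proof (rule inj_onI)
    fix l l' assume "l \<in> ?E" "l' \<in> ?E" "g l = g l'"
    then show "l = l'"
      using orth[of l l'] g[of l] by auto
  qed
  moreover have "independent (g ` ?E)"
  proof (rule pairwise_orthogonal_independent)
    show "pairwise orthogonal (g ` ?E)"
    proof (rule pairwise_imageI)
      fix l l' assume "l \<in> ?E" "l' \<in> ?E" "l \<noteq> l'"
      then show "orthogonal (g l) (g l')"
        using orth[of l l'] by (simp add: orthogonal_def)
    qed
    show "0 \<notin> g ` ?E"
    proof
      assume "0 \<in> g ` ?E"
      then obtain l where "l \<in> ?E" "0 = g l"
        by (rule imageE)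
      then show False
        using g[OF \<open>l \<in> ?E\<close>] by simp
    qed
  qed
  ultimately show ?thesis
    using independent_imp_finite finite_imageD by blast
qed

lemma lambda_max_eq_max_quadratic_form:
  fixes P :: "real^'n^'n"
  assumes sym: "symmetric_mat P" and "norm w0 = 1"
    and max: "\<And>w. w \<bullet> (P *v w) \<le> (w0 \<bullet> (P *v w0)) * (w \<bullet> w)"
  shows "lambda_max P = w0 \<bullet> (P *v w0)"
  unfolding lambda_max_def
proof (rule Max_eqI[OF finite_eigenvalues_symmetric_mat[OF sym]])
  show "w0 \<bullet> (P *v w0) \<in> {l. \<exists>v. v \<noteq> 0 \<and> P *v v = l *s v}"
    using symmetric_mat_maximizer_is_eigenvector[OF assms] \<open>norm w0 = 1\<close>
    by (auto simp: scalar_mult_eq_scaleR intro!: exI[of _ w0])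
  fix l assume "l \<in> {l. \<exists>v. v \<noteq> 0 \<and> P *v v = l *s v}"
  then obtain v where "v \<noteq> 0" "P *v v = l *\<^sub>R v"
    by (auto simp: scalar_mult_eq_scaleR)
  then have "l * (v \<bullet> v) \<le> (w0 \<bullet> (P *v w0)) * (v \<bullet> v)"
    using max[of v] by simp
  then show "l \<le> w0 \<bullet> (P *v w0)"
    using \<open>v \<noteq> 0\<close> by simp
qed

lemma quadratic_form_le_lambda_max:
  fixes P :: "real^'n^'n"
  assumes "symmetric_mat P"
  shows "w \<bullet> (P *v w) \<le> lambda_max P * (w \<bullet> w)"
  using lambda_max_eq_max_quadratic_form[OF assms] by (metis quadratic_form_attains_max)

lemma lambda_max_pos:
  fixes P :: "real^'n^'n"
  assumes "symmetric_mat P" and "pos_def P"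
  shows "lambda_max P > 0"
proof -
  obtain w0 where "norm w0 = 1" "\<And>w. w \<bullet> (P *v w) \<le> (w0 \<bullet> (P *v w0)) * (w \<bullet> w)"
    using quadratic_form_attains_max[of P] by blast
  moreover have "w0 \<noteq> 0"
    using \<open>norm w0 = 1\<close> by auto
  ultimately show ?thesis
    using assms lambda_max_eq_max_quadratic_form unfolding pos_def_def by metis
qed

lemma matrix_blinfun_mult_vector:
  fixes T :: "(real^'n) \<Rightarrow>\<^sub>L (real^'m)"
  shows "matrix (blinfun_apply T) *v v = T v"
  by (simp add: matrix_works bounded_linear.linear[OF blinfun.bounded_linear_right])

lemma bounded_linear_matrix_blinfun:
  "bounded_linear (\<lambda>T :: (real^'n) \<Rightarrow>\<^sub>L (real^'m). matrix (blinfun_apply T))"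
proof
  fix S T :: "(real^'n) \<Rightarrow>\<^sub>L (real^'m)" and r :: real
  show "matrix (blinfun_apply (S + T)) = matrix (blinfun_apply S) + matrix (blinfun_apply T)"
    by (simp add: matrix_def vec_eq_iff blinfun.bilinear_simps)
  show "matrix (blinfun_apply (r *\<^sub>R T)) = r *\<^sub>R matrix (blinfun_apply T)"
    by (simp add: matrix_def vec_eq_iff blinfun.bilinear_simps)
  have "norm (matrix (blinfun_apply T)) \<le> norm T * (CARD('m) * CARD('n))" for T :: "(real^'n) \<Rightarrow>\<^sub>L (real^'m)"
  proof -
    have entry: "\<bar>matrix (blinfun_apply T) $ i $ j\<bar> \<le> norm T" for i j
    proof -
      have "\<bar>matrix (blinfun_apply T) $ i $ j\<bar> \<le> norm (T (axis j 1))"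
        unfolding matrix_def by (simp add: component_le_norm_cart)
      also have "\<dots> \<le> norm T * norm (axis j (1::real))"
        by (rule norm_blinfun)
      finally show ?thesis by simp
    qed
    have "norm (matrix (blinfun_apply T)) \<le> (\<Sum>i\<in>UNIV. norm (matrix (blinfun_apply T) $ i))"
      unfolding norm_vec_def by (rule L2_set_le_sum) simp
    also have "\<dots> \<le> (\<Sum>i\<in>(UNIV::'m set). \<Sum>j\<in>(UNIV::'n set). \<bar>matrix (blinfun_apply T) $ i $ j\<bar>)"
      by (intro sum_mono norm_le_l1_cart)
    also have "\<dots> \<le> (\<Sum>i\<in>(UNIV::'m set). \<Sum>j\<in>(UNIV::'n set). norm T)"
      by (intro sum_mono entry)
    finally show ?thesis by (simp add: mult_ac)
  qed
  then show "\<exists>K. \<forall>T :: (real^'n) \<Rightarrow>\<^sub>L (real^'m). norm (matrix (blinfun_apply T)) \<le> norm T * K"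
    by blast
qed

lemma bounded_bilinear_matrix_mult:
  "bounded_bilinear ((**) :: real^'k^'i \<Rightarrow> real^'j^'k \<Rightarrow> real^'j^'i)"
  unfolding bilinear_conv_bounded_bilinear[symmetric] bilinear_def
  by (auto intro!: linearI simp: matrix_matrix_mult_def vec_eq_iff sum.distrib algebra_simps sum_distrib_left)

lemma bounded_linear_transpose: "bounded_linear (transpose :: real^'j^'i \<Rightarrow> real^'i^'j)"
  unfolding linear_conv_bounded_linear[symmetric]
  by (auto intro!: linearI simp: transpose_def vec_eq_iff)

lemmas matrix_mult_distribs =
  bounded_bilinear.add_left[OF bounded_bilinear_matrix_mult]
  bounded_bilinear.add_right[OF bounded_bilinear_matrix_mult]
  bounded_bilinear.diff_left[OF bounded_bilinear_matrix_mult]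
  bounded_bilinear.diff_right[OF bounded_bilinear_matrix_mult]
  bounded_bilinear.minus_left[OF bounded_bilinear_matrix_mult]
  bounded_bilinear.minus_right[OF bounded_bilinear_matrix_mult]

lemma jacobian_derivative_along_field:
  fixes f :: "real^'n \<Rightarrow> real^'n" and \<phi> :: "real^'n \<Rightarrow> real^'m"
  assumes d1: "\<And>y. (\<phi> has_derivative blinfun_apply (\<phi>' y)) (at y)"
    and d2: "\<And>y. (\<phi>' has_derivative blinfun_apply (\<phi>'' y)) (at y)"
    and cont: "continuous_on UNIV \<phi>''"
    and df: "(f has_derivative f') (at x)"
    and immersion: "\<And>y. \<phi>' y (f y) = A *v \<phi> y"
  shows "matrix (blinfun_apply (\<phi>'' x (f x)))
      = A ** matrix (blinfun_apply (\<phi>' x)) - matrix (blinfun_apply (\<phi>' x)) ** matrix f'"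
proof -
  have "((\<lambda>y. \<phi>' y (f y)) has_derivative (\<lambda>v. \<phi>' x (f' v) + \<phi>'' x v (f x))) (at x)"
    by (rule blinfun.FDERIV[OF d2 df])
  moreover have "((\<lambda>y. \<phi>' y (f y)) has_derivative (\<lambda>v. A *v \<phi>' x v)) (at x)"
    unfolding immersion by (rule bounded_linear.has_derivative[OF matrix_vector_mul_bounded_linear d1])
  ultimately have "(\<lambda>v. \<phi>' x (f' v) + \<phi>'' x v (f x)) = (\<lambda>v. A *v \<phi>' x v)"
    by (rule has_derivative_unique)
  then have diff: "\<phi>' x (f' v) + \<phi>'' x v (f x) = A *v \<phi>' x v" for v
    by (rule fun_cong)
  show ?thesis
  proof (rule matrix_eq[THEN iffD2], rule allI)
    fix v
    have "matrix (blinfun_apply (\<phi>'' x (f x))) *v v = \<phi>'' x v (f x)"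
      by (simp add: matrix_blinfun_mult_vector second_derivative_symmetric[OF d1 d2 cont])
    also have "\<dots> = A *v \<phi>' x v - \<phi>' x (f' v)"
      using diff[of v] by (simp add: algebra_simps)
    finally show "matrix (blinfun_apply (\<phi>'' x (f x))) *v v
        = (A ** matrix (blinfun_apply (\<phi>' x)) - matrix (blinfun_apply (\<phi>' x)) ** matrix f') *v v"
      using has_derivative_linear[OF df]
      by (simp add: matrix_blinfun_mult_vector matrix_works matrix_vector_mult_diff_rdistrib matrix_vector_mul_assoc[symmetric])
  qed
qed

lemma lie_deriv_congruence_metric:
  fixes f :: "real^'n \<Rightarrow> real^'n" and \<phi> :: "real^'n \<Rightarrow> real^'m" and A P :: "real^'m^'m"
  assumes "f differentiable (at x)" and "C2 \<phi>"
    and immersion: "\<And>y. jac \<phi> y *v f y = A *v \<phi> y"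
  defines "M \<equiv> \<lambda>y. transpose (jac \<phi> y) ** P ** jac \<phi> y"
  shows "lie_deriv f M x + transpose (jac f x) ** M x + M x ** jac f x
      = transpose (jac \<phi> x) ** (transpose A ** P + P ** A) ** jac \<phi> x"
proof -
  obtain \<phi>' \<phi>'' where d1: "\<And>y. (\<phi> has_derivative blinfun_apply (\<phi>' y)) (at y)"
    and d2: "\<And>y. (\<phi>' has_derivative blinfun_apply (\<phi>'' y)) (at y)"
    and cont: "continuous_on UNIV \<phi>''"
    using \<open>C2 \<phi>\<close> unfolding C2_def by blast
  obtain f' where df: "(f has_derivative f') (at x)"
    using \<open>f differentiable (at x)\<close> unfolding differentiable_def by blast
  have jac_\<phi>: "jac \<phi> = (\<lambda>y. matrix (blinfun_apply (\<phi>' y)))"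
    by (rule ext) (simp add: jac_def frechet_derivative_at[OF d1, symmetric])
  have jac_f: "jac f x = matrix f'"
    by (simp add: jac_def frechet_derivative_at[OF df, symmetric])
  define J where "J = jac \<phi> x"
  define J' where "J' h = matrix (blinfun_apply (\<phi>'' x h))" for h
  have DJ: "(jac \<phi> has_derivative J') (at x)"
    unfolding J'_def jac_\<phi> by (rule bounded_linear.has_derivative[OF bounded_linear_matrix_blinfun d2])
  then have "((\<lambda>y. transpose (jac \<phi> y)) has_derivative (\<lambda>h. transpose (J' h))) (at x)"
    by (rule bounded_linear.has_derivative[OF bounded_linear_transpose])
  then have DTP: "((\<lambda>y. transpose (jac \<phi> y) ** P) has_derivative (\<lambda>h. transpose (J' h) ** P)) (at x)"
    using bounded_bilinear.FDERIV[OF bounded_bilinear_matrix_mult _ has_derivative_const] by fastforce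
  have "(M has_derivative (\<lambda>h. transpose (J' h) ** P ** J + transpose J ** P ** J' h)) (at x)"
    unfolding M_def J_def
    using bounded_bilinear.FDERIV[OF bounded_bilinear_matrix_mult DTP DJ] by (simp add: add.commute)
  then have "lie_deriv f M x = transpose (J' (f x)) ** P ** J + transpose J ** P ** J' (f x)"
    unfolding lie_deriv_def by (simp add: frechet_derivative_at[symmetric])
  moreover have "J' (f x) = A ** J - J ** jac f x"
    unfolding J'_def J_def jac_f jac_\<phi>
    by (rule jacobian_derivative_along_field[OF d1 d2 cont df])
      (use immersion in \<open>simp add: jac_\<phi> matrix_blinfun_mult_vector\<close>)
  ultimately show ?thesis
    unfolding M_def J_def[symmetric]
    by (simp add: matrix_transpose_mul matrix_mult_distribs linear_diff[OF bounded_linear.linear[OF bounded_linear_transpose]]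
        matrix_mul_assoc)
qed

lemma quadratic_form_scaleR: "v \<bullet> ((c *\<^sub>R X) *v v) = c * (v \<bullet> (X *v v))"
  for v :: "real^'n"
  by (metis inner_scaleR_right scaleR_matrix_vector_assoc)

lemma quadratic_form_uminus: "v \<bullet> ((- X) *v v) = - (v \<bullet> (X *v v))"
  for v :: "real^'n"
  by (simp add: matrix_vector_mult_def inner_vec_def sum_negf)

lemma quadratic_form_congruence:
  "v \<bullet> ((transpose J ** P ** J) *v v) = (J *v v) \<bullet> (P *v (J *v v))"
  for v :: "real^'n" and J :: "real^'n^'m"
proof -
  have "(transpose J ** P ** J) *v v = (P *v (J *v v)) v* J"
    by (simp add: matrix_vector_mul_assoc[symmetric])
  then show ?thesis
    using dot_lmul_matrix[of "P *v (J *v v)" J v] by (simp add: inner_commute)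
qed

lemma quadratic_form_gram: "v \<bullet> ((transpose J ** J) *v v) = (J *v v) \<bullet> (J *v v)"
  for v :: "real^'n" and J :: "real^'n^'m"
  using quadratic_form_congruence[of v J "mat 1"] by simp

lemma full_rank_mult_vector_nonzero:
  fixes J :: "real^'n^'m"
  assumes "rank J = CARD('n)" and "v \<noteq> 0"
  shows "J *v v \<noteq> 0"
  using assms unfolding full_rank_injective by (metis injD matrix_vector_mult_0_right)

lemma pos_def_congruence:
  fixes J :: "real^'n^'m"
  assumes "pos_def P" and "rank J = CARD('n)"
  shows "pos_def (transpose J ** P ** J)"
  using assms full_rank_mult_vector_nonzero
  unfolding pos_def_def quadratic_form_congruence by blast

lemma neg_def_uminus_gram:
  fixes J :: "real^'n^'m"
  assumes "rank J = CARD('n)"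
  shows "neg_def (- (transpose J ** J))"
  using full_rank_mult_vector_nonzero[OF assms]
  unfolding neg_def_def quadratic_form_uminus quadratic_form_gram by simp

lemma neg_def_uminus_scaleR:
  assumes "c > 0" and "pos_def X"
  shows "neg_def (- (c *\<^sub>R X))"
  using assms unfolding neg_def_def pos_def_def quadratic_form_uminus quadratic_form_scaleR by simp

lemma uminus_gram_le_uminus_congruence:
  fixes J :: "real^'n^'m"
  assumes "symmetric_mat P" and "pos_def P"
  shows "- (transpose J ** J) \<preceq>\<^sub>L - ((1 / lambda_max P) *\<^sub>R (transpose J ** P ** J))"
  unfolding loewner_le_def quadratic_form_uminus quadratic_form_scaleR
    quadratic_form_congruence quadratic_form_gram
proof
  fix v
  have "(J *v v) \<bullet> (P *v (J *v v)) \<le> lambda_max P * ((J *v v) \<bullet> (J *v v))"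
    by (rule quadratic_form_le_lambda_max[OF assms(1)])
  then show "- ((J *v v) \<bullet> (J *v v)) \<le> - (1 / lambda_max P * ((J *v v) \<bullet> (P *v (J *v v))))"
    using lambda_max_pos[OF assms] by (simp add: field_simps)
qed

lemma unif_bounded_congruence:
  fixes J :: "'a \<Rightarrow> real^'n^'m"
  assumes "symmetric_mat P" and "pos_def P"
    and "unif_bounded (\<lambda>x. transpose (J x) ** J x)"
  shows "unif_bounded (\<lambda>x. transpose (J x) ** P ** J x)"
proof -
  obtain a1 a2 where "0 < a1" "a1 \<le> a2"
    and gram: "\<And>x v. a1 * (v \<bullet> v) \<le> (J x *v v) \<bullet> (J x *v v) \<and> (J x *v v) \<bullet> (J x *v v) \<le> a2 * (v \<bullet> v)"
    using assms(3) unfolding unif_bounded_def loewner_le_def quadratic_form_scaleR quadratic_form_gram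
    by auto
  obtain \<mu> where "\<mu> > 0" and lower: "\<And>w. \<mu> * (w \<bullet> w) \<le> w \<bullet> (P *v w)"
    using pos_def_coercive[OF assms(2)] by blast
  define lmax where "lmax = lambda_max P"
  have upper: "w \<bullet> (P *v w) \<le> lmax * (w \<bullet> w)" for w
    unfolding lmax_def by (rule quadratic_form_le_lambda_max[OF assms(1)])
  have "\<mu> \<le> lmax"
    using lower[of "axis undefined 1"] upper[of "axis undefined 1"] by simp
  show ?thesis
    unfolding unif_bounded_def loewner_le_def quadratic_form_scaleR quadratic_form_congruence
  proof (intro exI conjI allI)
    show "0 < \<mu> * a1" and "\<mu> * a1 \<le> lmax * a2"
      using \<open>0 < \<mu>\<close> \<open>0 < a1\<close> \<open>a1 \<le> a2\<close> \<open>\<mu> \<le> lmax\<close> by (auto intro: mult_mono)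
    fix x v
    have "\<mu> * a1 * (v \<bullet> v) \<le> \<mu> * ((J x *v v) \<bullet> (J x *v v))"
      using gram[of v x] \<open>0 < \<mu>\<close> by (simp add: mult.assoc)
    also have "\<dots> \<le> (J x *v v) \<bullet> (P *v (J x *v v))"
      by (rule lower)
    finally show "\<mu> * a1 * (v \<bullet> (mat 1 *v v)) \<le> (J x *v v) \<bullet> (P *v (J x *v v))"
      by simp
    have "(J x *v v) \<bullet> (P *v (J x *v v)) \<le> lmax * ((J x *v v) \<bullet> (J x *v v))"
      by (rule upper)
    also have "\<dots> \<le> lmax * a2 * (v \<bullet> v)"
      using gram[of v x] \<open>0 < \<mu>\<close> \<open>\<mu> \<le> lmax\<close> by (simp add: mult.assoc)
    finally show "(J x *v v) \<bullet> (P *v (J x *v v)) \<le> lmax * a2 * (v \<bullet> (mat 1 *v v))"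
      by simp
  qed
qed

theorem theorem1:
  fixes f :: "real^'n \<Rightarrow> real^'n"
    and \<phi> :: "real^'n \<Rightarrow> real^'m"
    and A P :: "real^'m^'m"
  assumes f_C2: "C2 f"
    and fc: "forward_complete f"
    and dim: "CARD('n) \<le> CARD('m)"
    and phi_C2: "C2 \<phi>"
    and hur: "hurwitz A"
    and rank: "\<forall>x. rank (jac \<phi> x) = CARD('n)"
    and immersion: "\<forall>x. jac \<phi> x *v f x = A *v \<phi> x"
    and P_sym: "symmetric_mat P" and P_pd: "pos_def P"
    and lyap: "transpose A ** P + P ** A = - mat 1"
  defines "M \<equiv> (\<lambda>x. transpose (jac \<phi> x) ** P ** jac \<phi> x)"
  shows "(\<forall>x. pos_def (M x))
    \<and> (\<forall>x. lie_deriv f M x + transpose (jac f x) ** M x + M x ** jac f x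
             = - (transpose (jac \<phi> x) ** jac \<phi> x)
         \<and> - (transpose (jac \<phi> x) ** jac \<phi> x) \<preceq>\<^sub>L - ((1 / lambda_max P) *\<^sub>R M x)
         \<and> neg_def (- ((1 / lambda_max P) *\<^sub>R M x)))
    \<and> asym_contracting_with f M
    \<and> (unif_bounded (\<lambda>x. transpose (jac \<phi> x) ** jac \<phi> x) \<longrightarrow>
         unif_bounded M \<and> contracting_with f M (1 / lambda_max P))"
proof -
  have pd: "pos_def (M x)" for x
    unfolding M_def using pos_def_congruence P_pd rank by blast
  have "f differentiable (at x)" for x
    using f_C2 unfolding C2_def differentiable_def by blast
  then have ident: "lie_deriv f M x + transpose (jac f x) ** M x + M x ** jac f x
      = - (transpose (jac \<phi> x) ** jac \<phi> x)" for x
    using lie_deriv_congruence_metric[of f x \<phi> A P] phi_C2 immersion lyap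
    unfolding M_def by (simp add: matrix_mult_distribs)
  have le: "- (transpose (jac \<phi> x) ** jac \<phi> x) \<preceq>\<^sub>L - ((1 / lambda_max P) *\<^sub>R M x)" for x
    unfolding M_def by (rule uminus_gram_le_uminus_congruence[OF P_sym P_pd])
  have nd: "neg_def (- ((1 / lambda_max P) *\<^sub>R M x))" for x
    using lambda_max_pos[OF P_sym P_pd] by (intro neg_def_uminus_scaleR pd) simp
  have "asym_contracting_with f M"
    unfolding asym_contracting_with_def using pd ident rank by (simp add: neg_def_uminus_gram)
  moreover have "unif_bounded M \<and> contracting_with f M (1 / lambda_max P)"
    if "unif_bounded (\<lambda>x. transpose (jac \<phi> x) ** jac \<phi> x)"
    using unif_bounded_congruence[OF P_sym P_pd that] pd ident le lambda_max_pos[OF P_sym P_pd]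
    unfolding contracting_with_def M_def by simp
  ultimately show ?thesis
    using pd ident le nd by blast
qed

end
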